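(* Let $n\ge 2$ be an integer, let $a_1,\dots,a_n>0$ with $\sum_{k=1}^n a_k=1$, and let $c_k,d_k,\beta_k\in\mathbb{R}$ ($k=1,\dots,n$) with $\max_{1\le k\le n}|d_k|<1$. Put $\alpha_1=0$, $\alpha_k=\sum_{j=1}^{k-1}a_j$ for $k=2,\dots,n+1$, and $S_k(x)=a_kx+\alpha_k$. Let $f\in C[0;1]$ be a continuous function satisfying $f=G(f)$, where $$[G(f)](t)=\sum_{k=1}^n\bigl(d_k f(S_k^{-1}(t))+c_k t+\beta_k\bigr)\chi_{I_k}(t),\qquad I_1=[0;\alpha_2],\ I_k=(\alpha_k;\alpha_{k+1}]\ (k\ge2).$$ Suppose $|d_i|<a_i$ for all $i=1,\dots,n$. Then $f$ satisfies the Hölder condition for every exponent $\alpha\in(0;1]$; in particular $f$ is Lipschitz: there is $C\ge0$ with $|f(x)-f(y)|\le C|x-y|$ for all $x,y\in[0;1]$.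
   Context: Here $\chi_I$ is the indicator function of the interval $I$. A continuous function $f$ with $G(f)=f$ is called an (affine) self-similar function with self-similarity parameters $\{a_k\},\{c_k\},\{d_k\},\{\beta_k\}$. A function $f$ on $[0;1]$ satisfies the Hölder condition with exponent $\alpha\in(0;1]$ if $\sup_{x\ne y}|f(x)-f(y)|/|x-y|^\alpha<\infty$. *)

theory Defs
  imports "HOL-Analysis.Analysis"
begin

definition alpha_pt :: "(nat \<Rightarrow> real) \<Rightarrow> nat \<Rightarrow> real" where
  "alpha_pt a k = (\<Sum>j=1..<k. a j)"

definition S_map :: "(nat \<Rightarrow> real) \<Rightarrow> nat \<Rightarrow> real \<Rightarrow> real" where
  "S_map a k x = a k * x + alpha_pt a k"

definition S_inv :: "(nat \<Rightarrow> real) \<Rightarrow> nat \<Rightarrow> real \<Rightarrow> real" where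
  "S_inv a k t = (t - alpha_pt a k) / a k"

definition I_int :: "(nat \<Rightarrow> real) \<Rightarrow> nat \<Rightarrow> real set" where
  "I_int a k = (if k = 1 then {0..alpha_pt a 2} else {alpha_pt a k<..alpha_pt a (Suc k)})"

definition G_op :: "nat \<Rightarrow> (nat \<Rightarrow> real) \<Rightarrow> (nat \<Rightarrow> real) \<Rightarrow> (nat \<Rightarrow> real) \<Rightarrow> (nat \<Rightarrow> real)
    \<Rightarrow> (real \<Rightarrow> real) \<Rightarrow> real \<Rightarrow> real" where
  "G_op n a c d \<beta> f t =
     (\<Sum>k=1..n. (d k * f (S_inv a k t) + c k * t + \<beta> k) * indicator (I_int a k) t)"

definition holder_on :: "real \<Rightarrow> real set \<Rightarrow> (real \<Rightarrow> real) \<Rightarrow> bool" where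
  "holder_on \<alpha> A f \<longleftrightarrow> (\<exists>C. \<forall>x\<in>A. \<forall>y\<in>A. x \<noteq> y \<longrightarrow> \<bar>f x - f y\<bar> / \<bar>x - y\<bar> powr \<alpha> \<le> C)"

end

theory Submission
  imports Defs
begin

text \<open>On each piece G h is an affine image of h rescaled by 1 / a k, so G maps B-Lipschitz
  functions that agree with f at 0 and 1 to B-Lipschitz functions as soon as
  |d k| * B / a k + |c k| \<le> B for all k; such a B exists because |d k| < a k. Moreover G
  contracts the uniform distance to f by the factor max |d k| < 1. Iterating G from the chord of f
  thus yields B-Lipschitz functions converging to f, so f is B-Lipschitz, and on [0;1] a
  Lipschitz function is H\<ouml>lder for every exponent in (0;1].\<close>

lemma alpha_pt_0 [simp]: "alpha_pt a 0 = 0"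
  and alpha_pt_Suc_0 [simp]: "alpha_pt a (Suc 0) = 0"
  by (simp_all add: alpha_pt_def)

lemma alpha_pt_Suc: "1 \<le> k \<Longrightarrow> alpha_pt a (Suc k) = alpha_pt a k + a k"
  unfolding alpha_pt_def by (simp add: sum.op_ivl_Suc)

lemma S_inv_dist: "0 < a k \<Longrightarrow> \<bar>S_inv a k x - S_inv a k y\<bar> = \<bar>x - y\<bar> / a k"
  by (simp add: S_inv_def diff_divide_distrib[symmetric])

locale unit_partition =
  fixes n :: nat and a :: "nat \<Rightarrow> real"
  assumes a_pos: "\<And>k. k \<in> {1..n} \<Longrightarrow> 0 < a k"
    and sum_a: "(\<Sum>k=1..n. a k) = 1"
begin

abbreviation piece :: "nat \<Rightarrow> real set" where
  "piece k \<equiv> {alpha_pt a k..alpha_pt a (Suc k)}"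

lemma n_pos: "1 \<le> n"
  using sum_a by (cases n) auto

lemma a_le_1: "k \<in> {1..n} \<Longrightarrow> a k \<le> 1"
  using member_le_sum[of k "{1..n}" a] a_pos sum_a by fastforce

lemma alpha_pt_last: "alpha_pt a (Suc n) = 1"
  using sum_a by (simp add: alpha_pt_def atLeastLessThanSuc_atLeastAtMost)

lemma alpha_pt_mono: "j \<le> k \<Longrightarrow> k \<le> Suc n \<Longrightarrow> alpha_pt a j \<le> alpha_pt a k"
  unfolding alpha_pt_def by (rule sum_mono2) (auto intro!: less_imp_le a_pos)

lemma alpha_pt_less_Suc: "k \<in> {1..n} \<Longrightarrow> alpha_pt a k < alpha_pt a (Suc k)"
  using alpha_pt_Suc a_pos by force

lemma alpha_pt_bounds: "k \<le> Suc n \<Longrightarrow> alpha_pt a k \<in> {0..1}"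
  using alpha_pt_mono[of 0 k] alpha_pt_mono[of k "Suc n"] alpha_pt_last by auto

lemma piece_subset_unit: "k \<in> {1..n} \<Longrightarrow> piece k \<subseteq> {0..1}"
  using alpha_pt_bounds[of k] alpha_pt_bounds[of "Suc k"] by auto

lemma unit_eq_UN_piece: "{0..1} = (\<Union>k\<in>{1..n}. piece k)"
proof -
  have "{0..alpha_pt a (Suc j)} = (\<Union>k\<in>{1..j}. piece k)" if "1 \<le> j" "j \<le> n" for j
    using that
  proof (induction j)
    case (Suc j)
    show ?case
    proof (cases "j = 0")
      case False
      have "{0..alpha_pt a (Suc (Suc j))} = {0..alpha_pt a (Suc j)} \<union> piece (Suc j)"
        using Suc.prems alpha_pt_bounds[of "Suc j"] alpha_pt_mono[of "Suc j" "Suc (Suc j)"]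
        by (intro ivl_disj_un_two_touch(4)[symmetric]) auto
      also have "\<dots> = (\<Union>k\<in>{1..Suc j}. piece k)"
        using Suc False by (auto simp: atLeastAtMostSuc_conv)
      finally show ?thesis .
    qed simp
  qed simp
  from this[of n] show ?thesis
    using n_pos alpha_pt_last by simp
qed

lemma S_inv_piece: "k \<in> {1..n} \<Longrightarrow> t \<in> piece k \<Longrightarrow> S_inv a k t \<in> {0..1}"
  using alpha_pt_Suc[of k] a_pos[of k] by (auto simp: S_inv_def divide_le_eq_1)

lemma I_int_subset_piece: "k \<in> {1..n} \<Longrightarrow> I_int a k \<subseteq> piece k"
  by (auto simp: I_int_def numeral_2_eq_2)

lemma I_int_disjoint:
  assumes "j \<in> {1..n}" "k \<in> {1..n}" "j < k" "t \<in> I_int a j"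
  shows "t \<notin> I_int a k"
proof
  assume "t \<in> I_int a k"
  moreover have "t \<le> alpha_pt a k"
    using I_int_subset_piece[OF assms(1)] assms alpha_pt_mono[of "Suc j" k] by force
  ultimately show False
    using assms(1,3) by (simp add: I_int_def)
qed

lemma G_op_on_I_int:
  assumes "k \<in> {1..n}" "t \<in> I_int a k"
  shows "G_op n a c d \<beta> h t = d k * h (S_inv a k t) + c k * t + \<beta> k"
proof -
  have "t \<notin> I_int a j" if "j \<in> {1..n}" "j \<noteq> k" for j
    using that assms I_int_disjoint[of j k t] I_int_disjoint[of k j t] by (metis linorder_neqE_nat)
  then have "G_op n a c d \<beta> h t
      = (\<Sum>j=1..n. if j = k then d k * h (S_inv a k t) + c k * t + \<beta> k else 0)"
    unfolding G_op_def using assms(2) by (intro sum.cong) (auto simp: indicator_def)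
  then show ?thesis
    using assms(1) by simp
qed

lemma piece_minus_I_int:
  assumes "k \<in> {1..n}" "t \<in> piece k" "t \<notin> I_int a k"
  obtains j where "j \<in> {1..n}" "k = Suc j" "t = alpha_pt a k" "t \<in> I_int a j" "S_inv a j t = 1"
proof -
  have "k \<noteq> 1"
    using assms by (auto simp: I_int_def numeral_2_eq_2)
  then obtain j where j: "j \<in> {1..n}" "k = Suc j"
    using assms(1) by (cases k) auto
  have t: "t = alpha_pt a k"
    using assms \<open>k \<noteq> 1\<close> by (auto simp: I_int_def)
  have "t \<in> I_int a j"
    using t j alpha_pt_less_Suc[of j] alpha_pt_bounds[of 2] n_pos
    by (auto simp: I_int_def numeral_2_eq_2)
  moreover have "S_inv a j t = 1"
    using t j alpha_pt_Suc[of j] a_pos[of j] by (auto simp: S_inv_def)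
  ultimately show thesis
    using that j t by blast
qed

lemma closure_I_int: "k \<in> {1..n} \<Longrightarrow> closure (I_int a k) = piece k"
  using alpha_pt_less_Suc[of k] by (auto simp: I_int_def numeral_2_eq_2)

end

lemma lipschitz_on_limit:
  fixes g :: "nat \<Rightarrow> 'a::metric_space \<Rightarrow> 'b::metric_space"
  assumes "\<And>m. B-lipschitz_on U (g m)" and "\<And>x. x \<in> U \<Longrightarrow> (\<lambda>m. g m x) \<longlonglongrightarrow> f x"
  shows "B-lipschitz_on U f"
proof (rule lipschitz_onI)
  fix x y assume x: "x \<in> U" and y: "y \<in> U"
  have lim: "(\<lambda>m. dist (g m x) (g m y)) \<longlonglongrightarrow> dist (f x) (f y)"
    using assms(2)[OF x] assms(2)[OF y] by (rule tendsto_dist)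
  have "dist (g m x) (g m y) \<le> B * dist x y" for m
    using lipschitz_onD[OF assms(1) x y] .
  then show "dist (f x) (f y) \<le> B * dist x y"
    by (intro LIMSEQ_le_const2[OF lim]) blast
qed (rule lipschitz_on_nonneg[OF assms(1)])

lemma tendsto_if_dist_le_geometric:
  fixes x :: "'a::real_normed_vector"
  assumes "\<forall>m. norm (g m - x) \<le> q ^ m * M" and "0 \<le> q" "q < 1"
  shows "g \<longlonglongrightarrow> x"
proof -
  have "(\<lambda>m. q ^ m * M) \<longlonglongrightarrow> 0"
    using assms(2,3) by (intro tendsto_mult_left_zero LIMSEQ_power_zero) simp
  with assms(1) have "(\<lambda>m. g m - x) \<longlonglongrightarrow> 0"
    by (rule Lim_null_comparison[OF always_eventually])
  then show ?thesis
    by (rule LIM_zero_cancel)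
qed

lemma holder_on_if_lipschitz_on:
  assumes "B-lipschitz_on A f" "A \<subseteq> {0..1}" "0 < \<alpha>" "\<alpha> \<le> 1"
  shows "holder_on \<alpha> A f"
  unfolding holder_on_def
proof (intro exI[of _ B] ballI impI)
  fix x y assume x: "x \<in> A" and y: "y \<in> A" and "x \<noteq> y"
  moreover have "x \<in> {0..1}" "y \<in> {0..1}"
    using assms(2) x y by auto
  ultimately have pos: "0 < \<bar>x - y\<bar>" and le1: "\<bar>x - y\<bar> \<le> 1"
    by auto
  have "\<bar>f x - f y\<bar> / \<bar>x - y\<bar> powr \<alpha> \<le> B * \<bar>x - y\<bar> / \<bar>x - y\<bar> powr \<alpha>"
    using lipschitz_onD[OF assms(1) x y] pos by (simp add: dist_real_def divide_right_mono)
  also have "\<dots> = B * \<bar>x - y\<bar> powr (1 - \<alpha>)"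
    using pos by (simp add: powr_diff)
  also have "\<dots> \<le> B"
    using le1 assms(3,4) lipschitz_on_nonneg[OF assms(1)] by (intro mult_left_le powr_le1) auto
  finally show "\<bar>f x - f y\<bar> / \<bar>x - y\<bar> powr \<alpha> \<le> B" .
qed

lemma exists_lipschitz_bound_preserved:
  fixes K :: "'i set" and a c d :: "'i \<Rightarrow> real"
  assumes "finite K" and d_less: "\<And>k. k \<in> K \<Longrightarrow> \<bar>d k\<bar> < a k"
  shows "\<exists>B\<ge>b. \<forall>k\<in>K. \<bar>d k\<bar> * B / a k + \<bar>c k\<bar> \<le> B"
proof -
  define r where "r k = \<bar>c k\<bar> * a k / (a k - \<bar>d k\<bar>)" for k
  define B where "B = max b 0 + (\<Sum>k\<in>K. r k)"
  have r_nonneg: "0 \<le> r k" if "k \<in> K" for k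
    using d_less[OF that] unfolding r_def by simp
  have sum_r: "0 \<le> (\<Sum>k\<in>K. r k)"
    using r_nonneg by (rule sum_nonneg)
  have "\<bar>d k\<bar> * B / a k + \<bar>c k\<bar> \<le> B" if k: "k \<in> K" for k
  proof -
    have gap: "0 < a k - \<bar>d k\<bar>"
      using d_less[OF k] by simp
    have "r k \<le> (\<Sum>k\<in>K. r k)"
      using assms(1) k r_nonneg by (intro member_le_sum) auto
    then have "r k \<le> B"
      unfolding B_def by linarith
    then have "\<bar>c k\<bar> * a k \<le> B * (a k - \<bar>d k\<bar>)"
      using gap unfolding r_def by (simp add: pos_divide_le_eq)
    then have "\<bar>d k\<bar> * B + \<bar>c k\<bar> * a k \<le> B * a k"
      by (simp add: algebra_simps)
    moreover have "0 < a k"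
      using gap by linarith
    ultimately show ?thesis
      by (simp add: field_simps)
  qed
  moreover have "b \<le> B"
    using sum_r unfolding B_def by linarith
  ultimately show ?thesis
    by blast
qed

locale self_similar_fixpoint = unit_partition +
  fixes c d \<beta> :: "nat \<Rightarrow> real" and f :: "real \<Rightarrow> real"
  assumes f_cont: "continuous_on {0..1} f"
    and f_fixed: "\<And>t. t \<in> {0..1} \<Longrightarrow> f t = G_op n a c d \<beta> f t"
begin

abbreviation G :: "(real \<Rightarrow> real) \<Rightarrow> real \<Rightarrow> real" where
  "G \<equiv> G_op n a c d \<beta>"

text \<open>The fixed point equation holds on I_int a k, hence by continuity on its closure.\<close>
lemma fixed_on_piece:
  assumes k: "k \<in> {1..n}" and t: "t \<in> piece k"
  shows "f t = d k * f (S_inv a k t) + c k * t + \<beta> k"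
proof -
  let ?r = "\<lambda>t. f t - (d k * f (S_inv a k t) + c k * t + \<beta> k)"
  have "continuous_on (piece k) (S_inv a k)"
    unfolding S_inv_def using a_pos[OF k] by (intro continuous_intros) simp
  then have "continuous_on (piece k) (\<lambda>t. f (S_inv a k t))"
    by (rule continuous_on_compose2[OF f_cont]) (use S_inv_piece[OF k] in blast)
  then have "continuous_on (closure (I_int a k)) ?r"
    unfolding closure_I_int[OF k]
    using continuous_on_subset[OF f_cont piece_subset_unit[OF k]] by (intro continuous_intros)
  moreover have "?r s = 0" if s: "s \<in> I_int a k" for s
  proof -
    have "s \<in> {0..1}"
      using s I_int_subset_piece[OF k] piece_subset_unit[OF k] by blast
    then have "f s = G f s"
      by (rule f_fixed)
    then show ?thesis
      unfolding G_op_on_I_int[OF k s] by simp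
  qed
  moreover have "t \<in> closure (I_int a k)"
    using t closure_I_int[OF k] by simp
  ultimately have "?r t = 0"
    by (rule continuous_constant_on_closure)
  then show ?thesis
    by simp
qed

text \<open>If h agrees with f at the end points, the point shared by two consecutive pieces
  causes no conflict.\<close>
lemma G_on_piece:
  assumes "h 0 = f 0" "h 1 = f 1" and k: "k \<in> {1..n}" and t: "t \<in> piece k"
  shows "G h t = d k * h (S_inv a k t) + c k * t + \<beta> k"
proof (cases "t \<in> I_int a k")
  case False
  then obtain j where j: "j \<in> {1..n}" "t = alpha_pt a k" "t \<in> I_int a j" "S_inv a j t = 1"
    using piece_minus_I_int[OF k t] by blast
  have "G h t = G f t"
    using G_op_on_I_int[OF j(1,3), of _ _ _ h] G_op_on_I_int[OF j(1,3), of _ _ _ f] j(4) assms(2)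
    by simp
  also have "\<dots> = d k * f (S_inv a k t) + c k * t + \<beta> k"
    using f_fixed[of t] fixed_on_piece[OF k t] piece_subset_unit[OF k] t by auto
  finally show ?thesis
    using j(2) assms(1) by (simp add: S_inv_def)
qed (rule G_op_on_I_int[OF k])

lemma G_endpoints:
  assumes "h 0 = f 0" "h 1 = f 1"
  shows "G h 0 = f 0" "G h 1 = f 1"
proof -
  have "1 \<in> {1..n}" "n \<in> {1..n}"
    using n_pos by auto
  moreover have "0 \<in> piece 1" "1 \<in> piece n"
    using alpha_pt_bounds[of 2] n_pos alpha_pt_last alpha_pt_bounds[of n]
    by (auto simp: numeral_2_eq_2)
  moreover have "S_inv a 1 0 = 0" "S_inv a n 1 = 1"
    using alpha_pt_Suc[of n] alpha_pt_last a_pos[of n] n_pos by (auto simp: S_inv_def)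
  ultimately show "G h 0 = f 0" "G h 1 = f 1"
    using G_on_piece[OF assms] fixed_on_piece assms by metis+
qed

lemma G_lipschitz:
  assumes "h 0 = f 0" "h 1 = f 1" and h_lip: "B-lipschitz_on {0..1} h"
    and B: "\<And>k. k \<in> {1..n} \<Longrightarrow> \<bar>d k\<bar> * B / a k + \<bar>c k\<bar> \<le> B"
  shows "B-lipschitz_on {0..1} (G h)"
proof (rule lipschitz_on_closed_Union[where I = "{1..n}" and U = piece])
  fix k assume k: "k \<in> {1..n}"
  show "B-lipschitz_on (piece k) (G h)"
  proof (rule lipschitz_onI)
    fix x y assume x: "x \<in> piece k" and y: "y \<in> piece k"
    have h: "\<bar>h (S_inv a k x) - h (S_inv a k y)\<bar> \<le> B * (\<bar>x - y\<bar> / a k)"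
      using lipschitz_onD[OF h_lip S_inv_piece[OF k x] S_inv_piece[OF k y]] S_inv_dist a_pos[OF k]
      by (simp add: dist_real_def)
    have "G h x - G h y = d k * (h (S_inv a k x) - h (S_inv a k y)) + c k * (x - y)"
      using G_on_piece[OF assms(1,2) k x] G_on_piece[OF assms(1,2) k y] by (simp add: algebra_simps)
    then have "\<bar>G h x - G h y\<bar> \<le> \<bar>d k\<bar> * \<bar>h (S_inv a k x) - h (S_inv a k y)\<bar> + \<bar>c k\<bar> * \<bar>x - y\<bar>"
      by (metis abs_triangle_ineq abs_mult)
    also have "\<dots> \<le> \<bar>d k\<bar> * (B * (\<bar>x - y\<bar> / a k)) + \<bar>c k\<bar> * \<bar>x - y\<bar>"
      using h by (intro add_mono mult_left_mono) auto
    also have "\<dots> = (\<bar>d k\<bar> * B / a k + \<bar>c k\<bar>) * \<bar>x - y\<bar>"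
      by (simp add: algebra_simps)
    also have "\<dots> \<le> B * \<bar>x - y\<bar>"
      using B[OF k] by (intro mult_right_mono) auto
    finally show "dist (G h x) (G h y) \<le> B * dist x y"
      by (simp add: dist_real_def)
  qed (rule lipschitz_on_nonneg[OF h_lip])
next
  show "{0..1} \<subseteq> (\<Union>k\<in>{1..n}. piece k)"
    using unit_eq_UN_piece by (rule equalityD1)
qed (use lipschitz_on_nonneg[OF h_lip] in auto)

lemma G_dist_fixpoint:
  assumes "h 0 = f 0" "h 1 = f 1" and q: "\<And>k. k \<in> {1..n} \<Longrightarrow> \<bar>d k\<bar> \<le> q"
    and e: "\<And>s. s \<in> {0..1} \<Longrightarrow> \<bar>h s - f s\<bar> \<le> e" and t: "t \<in> {0..1}"
  shows "\<bar>G h t - f t\<bar> \<le> q * e"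
proof -
  obtain k where k: "k \<in> {1..n}" and tk: "t \<in> piece k"
    using t unit_eq_UN_piece by blast
  have "\<bar>G h t - f t\<bar> = \<bar>d k\<bar> * \<bar>h (S_inv a k t) - f (S_inv a k t)\<bar>"
    unfolding G_on_piece[OF assms(1,2) k tk] fixed_on_piece[OF k tk]
    by (simp add: abs_mult[symmetric] algebra_simps)
  also have "\<dots> \<le> q * e"
    using q[OF k] e[OF S_inv_piece[OF k tk]] by (intro mult_mono) auto
  finally show ?thesis .
qed

lemma funpow_G_invariant:
  assumes "h 0 = f 0" "h 1 = f 1" "B-lipschitz_on {0..1} h"
    and "\<And>t. t \<in> {0..1} \<Longrightarrow> \<bar>h t - f t\<bar> \<le> M"
    and B: "\<And>k. k \<in> {1..n} \<Longrightarrow> \<bar>d k\<bar> * B / a k + \<bar>c k\<bar> \<le> B"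
    and q: "\<And>k. k \<in> {1..n} \<Longrightarrow> \<bar>d k\<bar> \<le> q"
  shows "(G ^^ m) h 0 = f 0 \<and> (G ^^ m) h 1 = f 1 \<and> B-lipschitz_on {0..1} ((G ^^ m) h)
    \<and> (\<forall>t\<in>{0..1}. \<bar>(G ^^ m) h t - f t\<bar> \<le> q ^ m * M)"
proof (induction m)
  case (Suc m)
  then have h0: "(G ^^ m) h 0 = f 0" and h1: "(G ^^ m) h 1 = f 1"
    and lip: "B-lipschitz_on {0..1} ((G ^^ m) h)"
    and dist: "\<And>t. t \<in> {0..1} \<Longrightarrow> \<bar>(G ^^ m) h t - f t\<bar> \<le> q ^ m * M"
    by auto
  show ?case
    using G_endpoints[OF h0 h1] G_lipschitz[OF h0 h1 lip B] G_dist_fixpoint[OF h0 h1 q dist]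
    by (simp add: mult.assoc)
qed (use assms in simp)

lemma lipschitz_fixpoint:
  assumes d_less: "\<And>k. k \<in> {1..n} \<Longrightarrow> \<bar>d k\<bar> < a k"
  obtains B where "B-lipschitz_on {0..1} f"
proof -
  define q where "q = (MAX k\<in>{1..n}. \<bar>d k\<bar>)"
  have q_ge: "\<bar>d k\<bar> \<le> q" if "k \<in> {1..n}" for k
    unfolding q_def using that by simp
  have "q \<in> (\<lambda>k. \<bar>d k\<bar>) ` {1..n}"
    unfolding q_def using n_pos by (intro Max_in) auto
  then have q: "0 \<le> q" "q < 1"
    using d_less a_le_1 by fastforce+
  have "\<exists>B\<ge>\<bar>f 1 - f 0\<bar>. \<forall>k\<in>{1..n}. \<bar>d k\<bar> * B / a k + \<bar>c k\<bar> \<le> B"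
    using finite_atLeastAtMost d_less by (rule exists_lipschitz_bound_preserved)
  then obtain B where B: "\<bar>f 1 - f 0\<bar> \<le> B"
    and B_preserved: "\<And>k. k \<in> {1..n} \<Longrightarrow> \<bar>d k\<bar> * B / a k + \<bar>c k\<bar> \<le> B"
    by blast
  define g0 where "g0 t = f 0 + (f 1 - f 0) * t" for t
  have g0_lip: "B-lipschitz_on {0..1} g0"
  proof (rule lipschitz_onI)
    fix x y :: real
    have "dist (g0 x) (g0 y) = \<bar>(f 1 - f 0) * (x - y)\<bar>"
      unfolding dist_real_def g0_def by (simp add: right_diff_distrib)
    also have "\<dots> \<le> B * dist x y"
      unfolding abs_mult dist_real_def using B by (rule mult_right_mono) simp
    finally show "dist (g0 x) (g0 y) \<le> B * dist x y" .
  qed (use B in linarith)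
  have "bounded ((\<lambda>t. g0 t - f t) ` {0..1})"
    unfolding g0_def
    by (intro compact_imp_bounded compact_continuous_image continuous_intros f_cont) simp
  then obtain M where "\<forall>y\<in>(\<lambda>t. g0 t - f t) ` {0..1}. norm y \<le> M"
    unfolding bounded_iff by blast
  then have M: "\<And>t. t \<in> {0..1} \<Longrightarrow> \<bar>g0 t - f t\<bar> \<le> M"
    by simp
  note g = funpow_G_invariant[of g0, OF _ _ g0_lip M B_preserved q_ge]
  have "B-lipschitz_on {0..1} ((G ^^ m) g0)" for m
    using g by (simp add: g0_def)
  moreover have "(\<lambda>m. (G ^^ m) g0 t) \<longlonglongrightarrow> f t" if "t \<in> {0..1}" for t
  proof -
    have "\<forall>m. norm ((G ^^ m) g0 t - f t) \<le> q ^ m * M"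
      using g that by (simp add: g0_def)
    then show ?thesis
      using q by (rule tendsto_if_dist_le_geometric)
  qed
  ultimately have "B-lipschitz_on {0..1} f"
    by (rule lipschitz_on_limit)
  then show thesis
    by (rule that)
qed

end

theorem theorem5:
  fixes n :: nat and a c d \<beta> :: "nat \<Rightarrow> real" and f :: "real \<Rightarrow> real"
  assumes "n \<ge> 2"
    and "\<forall>k\<in>{1..n}. a k > 0"
    and "(\<Sum>k=1..n. a k) = 1"
    and "(MAX k\<in>{1..n}. \<bar>d k\<bar>) < 1"
    and "continuous_on {0..1} f"
    and "\<forall>t\<in>{0..1}. f t = G_op n a c d \<beta> f t"
    and "\<forall>i\<in>{1..n}. \<bar>d i\<bar> < a i"
  shows "(\<forall>\<alpha>. 0 < \<alpha> \<and> \<alpha> \<le> 1 \<longrightarrow> holder_on \<alpha> {0..1} f)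
       \<and> (\<exists>C\<ge>0. \<forall>x\<in>{0..1}. \<forall>y\<in>{0..1}. \<bar>f x - f y\<bar> \<le> C * \<bar>x - y\<bar>)"
proof -
  interpret self_similar_fixpoint n a c d \<beta> f
    using assms(2,3,5,6) by unfold_locales blast+
  have "\<bar>d k\<bar> < a k" if "k \<in> {1..n}" for k
    using assms(7) that by blast
  then obtain B where B: "B-lipschitz_on {0..1} f"
    using lipschitz_fixpoint by blast
  have "holder_on \<alpha> {0..1} f" if "0 < \<alpha>" "\<alpha> \<le> 1" for \<alpha>
    using B order_refl that by (rule holder_on_if_lipschitz_on)
  moreover have "\<bar>f x - f y\<bar> \<le> B * \<bar>x - y\<bar>" if "x \<in> {0..1}" "y \<in> {0..1}" for x y
    using lipschitz_onD[OF B that] by (simp add: dist_real_def)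
  ultimately show ?thesis
    using lipschitz_on_nonneg[OF B] by blast
qed

end
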